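(* Let $r\ge1$ and let $\mathcal S_r\Lambda^1(I^2)=\mathcal P_r\Lambda^1(I^2)+\operatorname{span}\{d(x^{r+1}y),\,d(xy^{r+1})\}$. For an integer $s\ge1$, $\mathcal Q^-_s\Lambda^1(I^2)\subset\mathcal S_r\Lambda^1(I^2)$ if and only if $2s-1\le r$. Consequently (by Theorem 4 with $n=2$, $k=1$), the reference space $\mathcal S_r\Lambda^1(\hat K)$ yields $L^2$ approximation of order $h^{\lfloor (r+1)/2\rfloor}$ on meshes of bilinearly mapped quadrilaterals.
   Context: $I=[0,1]$, coordinates $(x,y)$ on $I^2=\hat K$. $\mathcal P_r\Lambda^1(I^2)$: $1$-forms $p\,dx+q\,dy$ with $p,q$ polynomials of total degree $\le r$. $\mathcal Q^-_s\Lambda^1(I^2)=\mathcal P_{s-1,s}\,dx\oplus\mathcal P_{s,s-1}\,dy$, where $\mathcal P_{a,b}$ is the space of polynomials of degree $\le a$ in $x$ and $\le b$ in $y$. Theorem 4 (case $n=2$, $k=1$): for $K=F_K(\hat K)$ with $F_K$ bilinear and $V(K)=(F_K^{-1})^*V(\hat K)$ (pullback of $1$-forms: $\hat v=DF_K^T(v\circ F_K)$ in vector proxy), if $\mathcal Q^-_s\Lambda^1(\hat K)\subset V(\hat K)$ then $\mathcal P_{s-1}\Lambda^1(K)\subset V(K)$ and $\inf_{v\in V(K)}\|u-v\|_{L^2\Lambda^1(K)}\le Ch_K^{s}|u|_{H^{s}\Lambda^1(K)}$. *)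

theory Defs
  imports Complex_Main
begin

text \<open>A 1-form p dx + q dy is represented by its
  vector proxy, the pair (p, q).\<close>

type_synonym form1 = "(real \<Rightarrow> real \<Rightarrow> real) \<times> (real \<Rightarrow> real \<Rightarrow> real)"

definition poly_tdeg :: "nat \<Rightarrow> (real \<Rightarrow> real \<Rightarrow> real) \<Rightarrow> bool" where
  "poly_tdeg r f \<longleftrightarrow> (\<exists>c :: nat \<Rightarrow> nat \<Rightarrow> real.
      \<forall>x y. f x y = (\<Sum>i\<le>r. \<Sum>j\<le>r - i. c i j * x ^ i * y ^ j))"

definition poly_bideg :: "nat \<Rightarrow> nat \<Rightarrow> (real \<Rightarrow> real \<Rightarrow> real) \<Rightarrow> bool" where
  "poly_bideg a b f \<longleftrightarrow> (\<exists>c :: nat \<Rightarrow> nat \<Rightarrow> real.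
      \<forall>x y. f x y = (\<Sum>i\<le>a. \<Sum>j\<le>b. c i j * x ^ i * y ^ j))"

definition P_forms :: "nat \<Rightarrow> form1 set" where
  "P_forms r = {(p, q). poly_tdeg r p \<and> poly_tdeg r q}"

definition Qminus_forms :: "nat \<Rightarrow> form1 set" where
  "Qminus_forms s = {(p, q). poly_bideg (s - 1) s p \<and> poly_bideg s (s - 1) q}"

text \<open>S_r Lambda^1(I^2) = P_r Lambda^1 + span{d(x^(r+1) y), d(x y^(r+1))}, where
  d(x^(r+1) y) = (r+1) x^r y dx + x^(r+1) dy and d(x y^(r+1)) = y^(r+1) dx + (r+1) x y^r dy.\<close>
definition S_forms :: "nat \<Rightarrow> form1 set" where
  "S_forms r = {(p, q). \<exists>a b :: real.
      (\<lambda>x y. p x y - a * (real r + 1) * x ^ r * y - b * y ^ (r + 1),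
       \<lambda>x y. q x y - a * x ^ (r + 1) - b * (real r + 1) * x * y ^ r) \<in> P_forms r}"

end

theory Submission
  imports Defs
begin

text \<open>Inclusion follows from counting degrees: every monomial of \<open>Q^-_s\<close> has total degree
  at most \<open>2s - 1\<close>, and \<open>P_r\<close> lies in \<open>S_r\<close>. Conversely, a polynomial of total degree at
  most \<open>r\<close> grows at most like \<open>t^r\<close> along every ray \<open>t (u, v)\<close>. Applied to the
  \<open>dy\<close>-component of a form \<open>p dx\<close> in \<open>S_r\<close> along the rays through \<open>(1, 0)\<close> and \<open>(1, 1)\<close>,
  this kills the coefficients of both \<open>d(x^(r+1) y)\<close> and \<open>d(x y^(r+1))\<close>, so \<open>p\<close> itself has
  total degree at most \<open>r\<close>. Since \<open>x^(s-1) y^s dx\<close> lies in \<open>Q^-_s\<close>, this forces \<open>2s - 1 \<le> r\<close>.\<close>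

lemma tendsto_power_div_power_at_top:
  assumes "k < m"
  shows "((\<lambda>t::real. t ^ k / t ^ m) \<longlongrightarrow> 0) at_top"
proof -
  have "((\<lambda>t::real. inverse (t ^ (m - k))) \<longlongrightarrow> 0) at_top"
    by (intro tendsto_inverse_0_at_top filterlim_pow_at_top filterlim_ident) (use assms in auto)
  moreover have "eventually (\<lambda>t::real. inverse (t ^ (m - k)) = t ^ k / t ^ m) at_top"
    using eventually_gt_at_top[of "0::real"]
  proof eventually_elim
    case (elim t)
    have "t ^ m = t ^ k * t ^ (m - k)" using assms by (simp flip: power_add)
    then show ?case using elim by (simp add: field_simps)
  qed
  ultimately show ?thesis by (rule Lim_transform_eventually)
qed

lemma poly_tdeg_ray_div_power_tendsto_0:
  assumes "poly_tdeg r f" "r < m"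
  shows "((\<lambda>t. f (u * t) (v * t) / t ^ m) \<longlongrightarrow> 0) at_top"
proof -
  obtain c where c: "\<And>x y. f x y = (\<Sum>i\<le>r. \<Sum>j\<le>r - i. c i j * x ^ i * y ^ j)"
    using assms unfolding poly_tdeg_def by blast
  have "((\<lambda>t. \<Sum>i\<le>r. \<Sum>j\<le>r - i. c i j * u ^ i * v ^ j * (t ^ (i + j) / t ^ m)) \<longlongrightarrow> 0) at_top"
  proof (intro tendsto_null_sum)
    fix i j assume "i \<in> {..r}" "j \<in> {..r - i}"
    then have "i + j < m" using assms by auto
    then show "((\<lambda>t. c i j * u ^ i * v ^ j * (t ^ (i + j) / t ^ m)) \<longlongrightarrow> 0) at_top"
      by (intro tendsto_mult_right_zero tendsto_power_div_power_at_top)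
  qed
  moreover have "(\<lambda>t. \<Sum>i\<le>r. \<Sum>j\<le>r - i. c i j * u ^ i * v ^ j * (t ^ (i + j) / t ^ m))
      = (\<lambda>t. f (u * t) (v * t) / t ^ m)"
    by (simp add: c sum_divide_distrib power_mult_distrib power_add mult_ac)
  ultimately show ?thesis by simp
qed

lemma poly_tdeg_ray_eq_power_imp_0:
  assumes "poly_tdeg r f" "r < m" "\<And>t. f (u * t) (v * t) = K * t ^ m"
  shows "K = 0"
proof -
  have "((\<lambda>t. f (u * t) (v * t) / t ^ m) \<longlongrightarrow> 0) at_top"
    using assms(1,2) by (rule poly_tdeg_ray_div_power_tendsto_0)
  moreover have "eventually (\<lambda>t::real. f (u * t) (v * t) / t ^ m = K) at_top"
    using eventually_gt_at_top[of "0::real"] by eventually_elim (simp add: assms(3))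
  ultimately have "((\<lambda>t::real. K) \<longlongrightarrow> 0) at_top"
    using Lim_transform_eventually by fastforce
  then show ?thesis by (simp add: tendsto_const_iff)
qed

lemma poly_tdeg_monomial_imp_le:
  assumes "poly_tdeg r (\<lambda>x y. x ^ i * y ^ j)"
  shows "i + j \<le> r"
proof (rule ccontr)
  assume "\<not> i + j \<le> r"
  then have "(1::real) = 0"
    by (intro poly_tdeg_ray_eq_power_imp_0[OF assms, of "i + j" 1 1]) (auto simp: power_add)
  then show False by simp
qed

lemma poly_bideg_monomial:
  assumes "k \<le> a" "l \<le> b"
  shows "poly_bideg a b (\<lambda>x y. x ^ k * y ^ l)"
  unfolding poly_bideg_def
proof (intro exI allI)
  fix x y :: real
  have "(\<Sum>i\<le>a. \<Sum>j\<le>b. of_bool (i = k \<and> j = l) * x ^ i * y ^ j)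
      = (\<Sum>i\<le>a. of_bool (i = k) * (\<Sum>j\<le>b. of_bool (j = l) * x ^ i * y ^ j))"
    by (simp add: sum_distrib_left of_bool_conj mult_ac)
  also have "\<dots> = x ^ k * y ^ l"
    using assms by (simp add: of_bool_def if_distrib if_distribR sum.delta' cong: if_cong)
  finally show "x ^ k * y ^ l = (\<Sum>i\<le>a. \<Sum>j\<le>b. of_bool (i = k \<and> j = l) * x ^ i * y ^ j)"
    by simp
qed

lemma poly_bideg_imp_poly_tdeg:
  assumes "poly_bideg a b f" "a + b \<le> r"
  shows "poly_tdeg r f"
proof -
  obtain c where c: "\<And>x y. f x y = (\<Sum>i\<le>a. \<Sum>j\<le>b. c i j * x ^ i * y ^ j)"
    using assms unfolding poly_bideg_def by blast
  define d where "d i j = (if i \<le> a \<and> j \<le> b then c i j else 0)" for i j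
  have "f x y = (\<Sum>i\<le>r. \<Sum>j\<le>r - i. d i j * x ^ i * y ^ j)" for x y
  proof -
    have "(\<Sum>i\<le>r. \<Sum>j\<le>r - i. d i j * x ^ i * y ^ j) = (\<Sum>i\<le>r. \<Sum>j\<le>b. d i j * x ^ i * y ^ j)"
    proof (rule sum.cong[OF refl])
      fix i assume "i \<in> {..r}"
      show "(\<Sum>j\<le>r - i. d i j * x ^ i * y ^ j) = (\<Sum>j\<le>b. d i j * x ^ i * y ^ j)"
      proof (cases "i \<le> a")
        case True
        then have "{..b} \<subseteq> {..r - i}" using assms by auto
        then show ?thesis by (intro sum.mono_neutral_right) (auto simp: d_def)
      qed (simp add: d_def)
    qed
    also have "\<dots> = (\<Sum>i\<le>a. \<Sum>j\<le>b. d i j * x ^ i * y ^ j)"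
      using assms by (intro sum.mono_neutral_right) (auto simp: d_def)
    also have "\<dots> = f x y" by (simp add: c d_def)
    finally show ?thesis by simp
  qed
  then show ?thesis unfolding poly_tdeg_def by blast
qed

lemma P_forms_subset_S_forms: "P_forms r \<subseteq> S_forms r"
proof
  fix w assume "w \<in> P_forms r"
  then obtain p q where "w = (p, q)"
    "(\<lambda>x y. p x y - 0 * (real r + 1) * x ^ r * y - 0 * y ^ (r + 1),
      \<lambda>x y. q x y - 0 * x ^ (r + 1) - 0 * (real r + 1) * x * y ^ r) \<in> P_forms r"
    by (cases w) simp
  then show "w \<in> S_forms r" unfolding S_forms_def by blast
qed

lemma Qminus_forms_subset_P_forms:
  assumes "2 * s - 1 \<le> r"
  shows "Qminus_forms s \<subseteq> P_forms r"
  using assms by (auto simp: Qminus_forms_def P_forms_def intro: poly_bideg_imp_poly_tdeg)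

lemma dx_form_in_S_forms_imp_poly_tdeg:
  assumes "(p, \<lambda>x y. 0) \<in> S_forms r" "r \<ge> 1"
  shows "poly_tdeg r p"
proof -
  obtain a b :: real where
    dx: "poly_tdeg r (\<lambda>x y. p x y - a * (real r + 1) * x ^ r * y - b * y ^ (r + 1))" and
    dy: "poly_tdeg r (\<lambda>x y. 0 - a * x ^ (r + 1) - b * (real r + 1) * x * y ^ r)"
    using assms(1) unfolding S_forms_def P_forms_def by auto
  have "- a = 0"
    by (rule poly_tdeg_ray_eq_power_imp_0[OF dy, of "r + 1" 1 0])
       (use assms(2) in \<open>auto simp: power_mult_distrib\<close>)
  then have a: "a = 0" by simp
  have "- (b * (real r + 1)) = 0"
    by (rule poly_tdeg_ray_eq_power_imp_0[OF dy, of "r + 1" 1 1])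
       (auto simp: a simp flip: power_Suc)
  then have "b = 0" by simp
  with a dx show ?thesis by simp
qed

theorem mainTheorem9:
  fixes r s :: nat
  assumes "r \<ge> 1" and "s \<ge> 1"
  shows "Qminus_forms s \<subseteq> S_forms r \<longleftrightarrow> 2 * s - 1 \<le> r"
proof
  assume "Qminus_forms s \<subseteq> S_forms r"
  moreover have "poly_bideg (s - 1) s (\<lambda>x y. x ^ (s - 1) * y ^ s)"
    by (rule poly_bideg_monomial) simp_all
  moreover have "poly_bideg s (s - 1) (\<lambda>x y. 0)"
    unfolding poly_bideg_def by (intro exI[of _ "\<lambda>i j. 0"]) simp
  ultimately have "((\<lambda>x y. x ^ (s - 1) * y ^ s), \<lambda>x y. 0) \<in> S_forms r"
    unfolding Qminus_forms_def by blast
  then have "poly_tdeg r (\<lambda>x y. x ^ (s - 1) * y ^ s)"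
    using assms(1) by (rule dx_form_in_S_forms_imp_poly_tdeg)
  then show "2 * s - 1 \<le> r"
    using assms(2) poly_tdeg_monomial_imp_le by fastforce
next
  assume "2 * s - 1 \<le> r"
  then show "Qminus_forms s \<subseteq> S_forms r"
    using Qminus_forms_subset_P_forms P_forms_subset_S_forms by blast
qed

end
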